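(* Let $n\ge1$, $1\le q,q_1,q_2\le\infty$ and $s,s_1,s_2\in\mathbb{R}$. If $L(q_1,s_1)\ast L(q_2,s_2)\subset L(q,s)$, then $1+\frac1q\ge\frac1{q_1}+\frac1{q_2}$.
   Context: $\langle x\rangle=(1+|x|^2)^{1/2}$. For $1\le p\le\infty$, $s\in\mathbb{R}$, $L(p,s)$ is the space of measurable $f$ on $\mathbb{R}^n$ with $\|f\|_{L(p,s)}=\big(\int|f(x)|^p\langle x\rangle^{ps}dx\big)^{1/p}<\infty$ (ess sup of $|f(x)|\langle x\rangle^s$ if $p=\infty$). Convolution $(f\ast g)(x)=\int f(x-y)g(y)dy$. "$X\ast Y\subset Z$" means there is $C$ with $f\ast g\in Z$ and $\|f\ast g\|_Z\le C\|f\|_X\|g\|_Y$ for all $f\in X$, $g\in Y$. Convention $1/\infty=0$. *)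

theory Defs
  imports "HOL-Analysis.Analysis" "HOL-Probability.Essential_Supremum"
begin

definition jbr :: "'a::euclidean_space \<Rightarrow> real" where
  "jbr x = sqrt (1 + (norm x)\<^sup>2)"

text \<open>Exponents p in [1,\<infinity>] are represented as ennreal values, with \<infinity> = top.
  The weighted L^p functional (p < \<infinity>: the p-th power integral; p = \<infinity>: ess sup).\<close>
definition wint :: "ennreal \<Rightarrow> real \<Rightarrow> ('a::euclidean_space \<Rightarrow> real) \<Rightarrow> ennreal" where
  "wint p s f = (\<integral>\<^sup>+ x. ennreal (\<bar>f x\<bar> powr enn2real p * jbr x powr (enn2real p * s)) \<partial>lebesgue)"

definition wsup :: "real \<Rightarrow> ('a::euclidean_space \<Rightarrow> real) \<Rightarrow> ereal" where
  "wsup s f = esssup lebesgue (\<lambda>x. ereal (\<bar>f x\<bar> * jbr x powr s))"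

definition Lw :: "ennreal \<Rightarrow> real \<Rightarrow> ('a::euclidean_space \<Rightarrow> real) set" where
  "Lw p s = {f. f \<in> borel_measurable lebesgue \<and>
     (if p = top then wsup s f < top else wint p s f < top)}"

definition Lw_norm :: "ennreal \<Rightarrow> real \<Rightarrow> ('a::euclidean_space \<Rightarrow> real) \<Rightarrow> real" where
  "Lw_norm p s f = (if p = top then real_of_ereal (wsup s f)
                    else enn2real (wint p s f) powr (1 / enn2real p))"

definition conv :: "('a::euclidean_space \<Rightarrow> real) \<Rightarrow> ('a \<Rightarrow> real) \<Rightarrow> 'a \<Rightarrow> real" where
  "conv f g x = (\<integral> y. f (x - y) * g y \<partial>lebesgue)"

definition conv_incl :: "'a::euclidean_space itself \<Rightarrow> ennreal \<Rightarrow> real \<Rightarrow> ennreal \<Rightarrow> real \<Rightarrow> ennreal \<Rightarrow> real \<Rightarrow> bool" where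
  "conv_incl _ p1 s1 p2 s2 p s \<longleftrightarrow> (\<exists>C::real. \<forall>(f::'a::euclidean_space \<Rightarrow> real) g.
      f \<in> Lw p1 s1 \<longrightarrow> g \<in> Lw p2 s2 \<longrightarrow>
        (AE x in lebesgue. integrable lebesgue (\<lambda>y. f (x - y) * g y)) \<and>
        conv f g \<in> Lw p s \<and>
        Lw_norm p s (conv f g) \<le> C * Lw_norm p1 s1 f * Lw_norm p2 s2 g)"

end

theory Submission
  imports Defs
begin

text \<open>Test the inclusion on \<open>f = g = \<chi>\<^bsub>B(0,2r)\<^esub>\<close> for small \<open>r\<close>. The weights
  \<open>\<langle>x\<rangle>\<^sup>s\<close> are bounded above and below on the unit ball, so
  \<open>\<parallel>f\<parallel>\<^bsub>L(p,s)\<^esub> \<lesssim> |B(0,2r)|\<^bsup>1/p\<^esup>\<close>, while \<open>f * f \<ge> |B(0,r)|\<close> on \<open>B(0,r)\<close> gives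
  \<open>\<parallel>f * f\<parallel>\<^bsub>L(q,s)\<^esub> \<gtrsim> |B(0,r)|\<^bsup>1+1/q\<^esup>\<close>. Since \<open>|B(0,r)| \<sim> r\<^sup>n\<close>, the inclusion yields
  \<open>r\<^bsup>n(1+1/q)\<^esup> \<lesssim> r\<^bsup>n(1/q\<^sub>1+1/q\<^sub>2)\<^esup>\<close> as \<open>r \<rightarrow> 0\<close>, which forces the exponent inequality.
  If \<open>q\<^sub>1\<close> or \<open>q\<^sub>2\<close> is infinite the claim is trivial.\<close>

lemma jbr_powr_bounds:
  fixes x :: "'a::euclidean_space"
  assumes "norm x \<le> 1"
  shows "jbr x powr e \<le> 2 powr \<bar>e\<bar>" and "2 powr (-\<bar>e\<bar>) \<le> jbr x powr e"
proof -
  have "(norm x)\<^sup>2 \<le> 1" using assms by (simp add: power_le_one)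
  then have "jbr x \<le> sqrt 4" unfolding jbr_def by (intro real_sqrt_le_mono) simp
  then have j: "1 \<le> jbr x" "jbr x \<le> 2" unfolding jbr_def by simp_all
  have "jbr x powr e \<le> jbr x powr \<bar>e\<bar>" using j by (intro powr_mono) auto
  also have "\<dots> \<le> 2 powr \<bar>e\<bar>" using j by (intro powr_mono2) auto
  finally show "jbr x powr e \<le> 2 powr \<bar>e\<bar>" .
  have "2 powr (-\<bar>e\<bar>) \<le> jbr x powr (-\<bar>e\<bar>)"
    using j by (simp add: powr_minus le_imp_inverse_le powr_mono2)
  also have "\<dots> \<le> jbr x powr e" using j by (intro powr_mono) auto
  finally show "2 powr (-\<bar>e\<bar>) \<le> jbr x powr e" .
qed

lemma measure_lebesgue_ball:
  "0 \<le> r \<Longrightarrow> measure lebesgue (ball (x::'a::euclidean_space) r) = unit_ball_vol DIM('a) * r ^ DIM('a)"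
  using content_ball[of r x] by simp

lemma emeasure_ball_eq_measure:
  "emeasure lebesgue (ball (x::'a::euclidean_space) r) = ennreal (measure lebesgue (ball x r))"
  by (simp add: emeasure_eq_measure2)

lemma wint_indicator_ball_le:
  fixes r :: real
  assumes "0 \<le> p" "r \<le> 1"
  shows "wint (ennreal p) s (indicator (ball (0::'a::euclidean_space) r))
     \<le> ennreal (2 powr \<bar>p * s\<bar> * measure lebesgue (ball (0::'a) r))"
proof -
  have "wint (ennreal p) s (indicator (ball (0::'a) r))
     \<le> (\<integral>\<^sup>+ x. ennreal (2 powr \<bar>p * s\<bar>) * indicator (ball (0::'a) r) x \<partial>lebesgue)"
    unfolding wint_def
  proof (intro nn_integral_mono)
    fix x :: 'a
    show "ennreal (\<bar>indicator (ball 0 r) x :: real\<bar> powr enn2real (ennreal p) * jbr x powr (enn2real (ennreal p) * s))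
         \<le> ennreal (2 powr \<bar>p * s\<bar>) * indicator (ball 0 r) x"
      using assms jbr_powr_bounds(1)[of x "p * s"]
      by (cases "x \<in> ball 0 r") (auto intro: ennreal_leI)
  qed
  also have "\<dots> = ennreal (2 powr \<bar>p * s\<bar> * measure lebesgue (ball (0::'a) r))"
    by (simp add: nn_integral_cmult_indicator emeasure_ball_eq_measure ennreal_mult)
  finally show ?thesis .
qed

lemma wint_ge_on_ball:
  fixes h :: "'a::euclidean_space \<Rightarrow> real"
  assumes "0 \<le> p" "r \<le> 1" "0 \<le> V" "\<And>x. x \<in> ball 0 r \<Longrightarrow> V \<le> \<bar>h x\<bar>"
  shows "ennreal (2 powr (-\<bar>p * s\<bar>) * V powr p * measure lebesgue (ball (0::'a) r)) \<le> wint (ennreal p) s h"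
proof -
  have "ennreal (2 powr (-\<bar>p * s\<bar>) * V powr p * measure lebesgue (ball (0::'a) r))
      = (\<integral>\<^sup>+ x. ennreal (2 powr (-\<bar>p * s\<bar>) * V powr p) * indicator (ball (0::'a) r) x \<partial>lebesgue)"
    by (simp add: nn_integral_cmult_indicator emeasure_ball_eq_measure ennreal_mult)
  also have "\<dots> \<le> wint (ennreal p) s h"
    unfolding wint_def
  proof (intro nn_integral_mono)
    fix x :: 'a
    show "ennreal (2 powr (-\<bar>p * s\<bar>) * V powr p) * indicator (ball 0 r) x
       \<le> ennreal (\<bar>h x\<bar> powr enn2real (ennreal p) * jbr x powr (enn2real (ennreal p) * s))"
    proof (cases "x \<in> ball 0 r")
      case True
      have "2 powr (-\<bar>p * s\<bar>) * V powr p \<le> jbr x powr (p * s) * \<bar>h x\<bar> powr p"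
        using True assms jbr_powr_bounds(2)[of x "p * s"] by (intro mult_mono powr_mono2) auto
      then show ?thesis using True assms by (auto intro: ennreal_leI simp: mult.commute)
    qed simp
  qed
  finally show ?thesis .
qed

lemma wsup_ge_on_ball:
  fixes h :: "'a::euclidean_space \<Rightarrow> real"
  assumes "0 < r" "r \<le> 1" "\<And>x. x \<in> ball 0 r \<Longrightarrow> V \<le> \<bar>h x\<bar>"
  shows "ereal (2 powr (-\<bar>s\<bar>) * V) \<le> wsup s h"
proof (rule ccontr)
  assume "\<not> ?thesis"
  then have less: "wsup s h < ereal (2 powr (-\<bar>s\<bar>) * V)" by simp
  have "AE x in lebesgue. ereal (\<bar>h x\<bar> * jbr x powr s) \<le> wsup s h"
    unfolding wsup_def by (rule esssup_AE)
  then have "AE x in lebesgue. x \<notin> ball (0::'a) r"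
  proof eventually_elim
    case (elim x)
    show ?case
    proof
      assume x: "x \<in> ball 0 r"
      then have "2 powr (-\<bar>s\<bar>) * V \<le> \<bar>h x\<bar> * jbr x powr s"
        using assms jbr_powr_bounds(2)[of x s] by (subst mult.commute, intro mult_mono) auto
      then show False using elim less by (meson ereal_less_eq(3) leD order.trans)
    qed
  qed
  then have "emeasure lebesgue (ball (0::'a) r) = 0"
    by (subst (asm) AE_iff_null_sets[symmetric]) auto
  then show False
    using assms emeasure_ball[of r "0::'a"] unit_ball_vol_pos[of "real DIM('a)"] by simp
qed

lemma ennreal_exponent_cases:
  assumes "1 \<le> p" "p \<noteq> top"
  obtains p' where "p = ennreal p'" "1 \<le> p'" "enn2real (1 / p) = 1 / p'"
proof -
  obtain p' where p': "p = ennreal p'" "0 \<le> p'" using assms(2) by (cases p) auto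
  then have "1 \<le> p'" using assms(1) by (simp add: ennreal_1[symmetric] del: ennreal_1)
  moreover have "enn2real (1 / p) = 1 / p'"
    using p' \<open>1 \<le> p'\<close> by (simp add: divide_ennreal[symmetric] ennreal_1[symmetric] del: ennreal_1)
  ultimately show ?thesis using p' that by blast
qed

lemma ennreal_enn2real_inverse:
  "1 \<le> (x::ennreal) \<Longrightarrow> ennreal (enn2real (1 / x)) = 1 / x"
  using ennreal_divide_eq_top_iff ennreal_enn2real_if by force

lemma ennreal_inverse_le_1:
  "1 \<le> (x::ennreal) \<Longrightarrow> 1 / x \<le> 1"
  by (metis divide_le_posI_ennreal mult.right_neutral not_gr_zero not_one_le_zero)

lemma indicator_ball_in_Lw:
  assumes "1 \<le> p" "p \<noteq> top" "r \<le> 1"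
  shows "indicator (ball (0::'a::euclidean_space) r) \<in> Lw p s"
proof -
  obtain p' where p': "p = ennreal p'" "1 \<le> p'" using assms(1,2) by (rule ennreal_exponent_cases)
  then have "wint p s (indicator (ball (0::'a) r)) < top"
    using le_less_trans[OF wint_indicator_ball_le[of p' r s, where 'a='a] ennreal_less_top] p' assms
    by simp
  then show ?thesis using assms(2) unfolding Lw_def by (simp add: borel_measurable_indicator)
qed

lemma Lw_norm_indicator_ball_le:
  assumes "1 \<le> p" "p \<noteq> top" "r \<le> 1"
  shows "Lw_norm p s (indicator (ball (0::'a::euclidean_space) r))
     \<le> 2 powr \<bar>s\<bar> * measure lebesgue (ball (0::'a) r) powr enn2real (1 / p)"
proof -
  obtain p' where p': "p = ennreal p'" "1 \<le> p'" "enn2real (1 / p) = 1 / p'"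
    using assms(1,2) by (rule ennreal_exponent_cases)
  let ?M = "measure lebesgue (ball (0::'a) r)"
  have "Lw_norm p s (indicator (ball (0::'a) r)) \<le> (2 powr \<bar>p' * s\<bar> * ?M) powr (1 / p')"
    using enn2real_mono[OF wint_indicator_ball_le[of p' r s]] p' assms
    unfolding Lw_norm_def by (auto intro!: powr_mono2)
  also have "\<dots> = 2 powr \<bar>s\<bar> * ?M powr enn2real (1 / p)"
    using p' by (simp add: powr_mult powr_powr abs_mult)
  finally show ?thesis .
qed

text \<open>Since \<open>1 / \<infinity> = 0\<close> in \<open>ennreal\<close>, the case \<open>q = \<infinity>\<close> is covered uniformly.\<close>
lemma Lw_norm_ge_on_ball:
  fixes h :: "'a::euclidean_space \<Rightarrow> real"
  assumes "1 \<le> q" "h \<in> Lw q s" "0 < r" "r \<le> 1" "0 \<le> V" "\<And>x. x \<in> ball 0 r \<Longrightarrow> V \<le> \<bar>h x\<bar>"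
  shows "2 powr (-\<bar>s\<bar>) * V * measure lebesgue (ball (0::'a) r) powr enn2real (1 / q) \<le> Lw_norm q s h"
proof (cases "q = top")
  case True
  have "ereal (2 powr (-\<bar>s\<bar>) * V) \<le> wsup s h" using assms by (intro wsup_ge_on_ball) auto
  moreover have "wsup s h < top" using assms(2) True unfolding Lw_def by simp
  moreover have "measure lebesgue (ball (0::'a) r) > 0"
    using assms measure_lebesgue_ball[of r "0::'a"] by simp
  ultimately show ?thesis using True unfolding Lw_norm_def by (cases "wsup s h") auto
next
  case False
  obtain p where p: "q = ennreal p" "1 \<le> p" "enn2real (1 / q) = 1 / p"
    using assms(1) False by (rule ennreal_exponent_cases)
  let ?M = "measure lebesgue (ball (0::'a) r)"
  have "ennreal (2 powr (-\<bar>p * s\<bar>) * V powr p * ?M) \<le> wint q s h"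
    unfolding p(1) using p assms by (intro wint_ge_on_ball) auto
  moreover have "wint q s h < top" using assms(2) False unfolding Lw_def by simp
  ultimately have "2 powr (-\<bar>p * s\<bar>) * V powr p * ?M \<le> enn2real (wint q s h)"
    by (metis enn2real_ennreal enn2real_mono measure_nonneg mult_nonneg_nonneg powr_ge_zero)
  then have "(2 powr (-\<bar>p * s\<bar>) * V powr p * ?M) powr (1 / p) \<le> Lw_norm q s h"
    unfolding Lw_norm_def using False p by (auto intro!: powr_mono2)
  moreover have "(2 powr (-\<bar>p * s\<bar>) * V powr p * ?M) powr (1 / p)
      = 2 powr (-\<bar>s\<bar>) * V * ?M powr enn2real (1 / q)"
    using p assms by (simp add: powr_mult powr_powr abs_mult)
  ultimately show ?thesis by simp
qed

lemma conv_indicator_ball_ge: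
  fixes x :: "'a::euclidean_space"
  assumes "x \<in> ball 0 r"
  shows "measure lebesgue (ball (0::'a) r) \<le> conv (indicator (ball 0 (2 * r))) (indicator (ball 0 (2 * r))) x"
proof -
  let ?S = "ball x (2 * r) \<inter> ball (0::'a) (2 * r)"
  have "(\<lambda>y. indicator (ball (0::'a) (2 * r)) (x - y) * indicator (ball (0::'a) (2 * r)) y) = indicat_real ?S"
    by (auto simp: indicator_def dist_norm norm_minus_commute)
  then have "conv (indicator (ball 0 (2 * r))) (indicator (ball 0 (2 * r))) x = measure lebesgue ?S"
    unfolding conv_def by simp
  moreover have "ball 0 r \<subseteq> ?S"
  proof
    fix y :: 'a assume "y \<in> ball 0 r"
    then have "norm y < r" "norm x < r" "0 \<le> norm y" using assms by auto
    then have "norm (x - y) < 2 * r" "norm y < 2 * r" using norm_triangle_ineq4[of x y] by linarith+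
    then show "y \<in> ?S" by (simp add: dist_norm)
  qed
  then have "measure lebesgue (ball (0::'a) r) \<le> measure lebesgue ?S"
    by (intro measure_mono_fmeasurable) (auto intro: lmeasurable_open)
  ultimately show ?thesis by simp
qed

lemma measure_ball_powr:
  fixes e :: real
  assumes "0 < r"
  shows "measure lebesgue (ball (0::'a::euclidean_space) r) powr e
     = unit_ball_vol DIM('a) powr e * r powr (DIM('a) * e)"
  unfolding measure_lebesgue_ball[OF less_imp_le[OF assms]]
  using assms by (simp add: powr_mult powr_realpow[symmetric] powr_powr)

lemma powr_exponent_le_of_bound_at_0:
  fixes a b c C \<delta> :: real
  assumes "0 < c" "0 < \<delta>" "\<And>r. 0 < r \<Longrightarrow> r \<le> \<delta> \<Longrightarrow> c * r powr a \<le> C * r powr b"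
  shows "b \<le> a"
proof (rule ccontr)
  assume "\<not> b \<le> a"
  then have "((\<lambda>r. C * r powr (b - a)) \<longlongrightarrow> C * 0) (at_right 0)"
    by (intro tendsto_mult tendsto_const tendsto_zero_powrI[where b="b - a"])
       (auto intro!: eventually_at_rightI[of 0 1])
  moreover have "\<forall>\<^sub>F r in at_right 0. c \<le> C * r powr (b - a)"
  proof (rule eventually_at_rightI[of 0 \<delta>])
    fix r :: real assume r: "r \<in> {0<..<\<delta>}"
    have "c * r powr a \<le> (C * r powr (b - a)) * r powr a"
      using assms(3)[of r] r by (simp add: powr_diff field_simps)
    then show "c \<le> C * r powr (b - a)" using r by simp
  qed (use assms in auto)
  ultimately have "c \<le> C * 0" by (intro tendsto_lowerbound) auto
  then show False using assms by simp
qed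

lemma conv_incl_indicator_ball_bound:
  fixes p1 p2 q :: ennreal
  assumes p1: "1 \<le> p1" "p1 \<noteq> top" and p2: "1 \<le> p2" "p2 \<noteq> top" and q: "1 \<le> q"
    and incl: "conv_incl TYPE('a::euclidean_space) p1 s1 p2 s2 q s"
  obtains K where "\<And>r. 0 < r \<Longrightarrow> r \<le> 1/2 \<Longrightarrow>
      2 powr (-\<bar>s\<bar>) * measure lebesgue (ball (0::'a) r) powr (1 + enn2real (1 / q))
      \<le> K * measure lebesgue (ball (0::'a) (2 * r)) powr (enn2real (1 / p1) + enn2real (1 / p2))"
proof -
  obtain C where C: "\<And>(f::'a \<Rightarrow> real) g. f \<in> Lw p1 s1 \<Longrightarrow> g \<in> Lw p2 s2 \<Longrightarrow>
      conv f g \<in> Lw q s \<and> Lw_norm q s (conv f g) \<le> C * Lw_norm p1 s1 f * Lw_norm p2 s2 g"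
    using incl unfolding conv_incl_def by blast
  let ?M = "\<lambda>r. measure lebesgue (ball (0::'a) r)"
  define \<theta>1 where "\<theta>1 = enn2real (1 / p1)"
  define \<theta>2 where "\<theta>2 = enn2real (1 / p2)"
  define \<theta> where "\<theta> = enn2real (1 / q)"
  have "2 powr (-\<bar>s\<bar>) * ?M r powr (1 + \<theta>)
      \<le> (max C 0 * 2 powr (\<bar>s1\<bar> + \<bar>s2\<bar>)) * ?M (2 * r) powr (\<theta>1 + \<theta>2)"
    if r: "0 < r" "r \<le> 1/2" for r
  proof -
    define f :: "'a \<Rightarrow> real" where "f = indicator (ball 0 (2 * r))"
    have "f \<in> Lw p1 s1" "f \<in> Lw p2 s2"
      unfolding f_def using p1 p2 r by (auto intro: indicator_ball_in_Lw)
    with C have ff: "conv f f \<in> Lw q s" "Lw_norm q s (conv f f) \<le> C * Lw_norm p1 s1 f * Lw_norm p2 s2 f"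
      by auto
    have "?M r > 0" using r measure_lebesgue_ball[of r "0::'a"] by simp
    then have "2 powr (-\<bar>s\<bar>) * ?M r powr (1 + \<theta>) = 2 powr (-\<bar>s\<bar>) * ?M r * ?M r powr \<theta>"
      by (simp add: powr_add)
    also have "\<dots> \<le> Lw_norm q s (conv f f)"
      unfolding \<theta>_def using r q ff(1) conv_indicator_ball_ge[of _ r]
      by (intro Lw_norm_ge_on_ball) (auto simp: f_def intro: order_trans[OF _ abs_ge_self])
    also have "\<dots> \<le> max C 0 * (2 powr \<bar>s1\<bar> * ?M (2 * r) powr \<theta>1) * (2 powr \<bar>s2\<bar> * ?M (2 * r) powr \<theta>2)"
    proof -
      have "0 \<le> Lw_norm p1 s1 f" "0 \<le> Lw_norm p2 s2 f" unfolding Lw_norm_def using p1 p2 by auto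
      moreover have "Lw_norm p1 s1 f \<le> 2 powr \<bar>s1\<bar> * ?M (2 * r) powr \<theta>1"
        "Lw_norm p2 s2 f \<le> 2 powr \<bar>s2\<bar> * ?M (2 * r) powr \<theta>2"
        unfolding f_def \<theta>1_def \<theta>2_def using r
        by (intro Lw_norm_indicator_ball_le p1 p2; simp)+
      ultimately show ?thesis
        using ff(2) order_trans[OF _ mult_right_mono[OF mult_right_mono[OF max.cobounded1[of C 0]]]]
        by (smt (verit) mult_mono mult_nonneg_nonneg)
    qed
    also have "\<dots> = (max C 0 * 2 powr (\<bar>s1\<bar> + \<bar>s2\<bar>)) * ?M (2 * r) powr (\<theta>1 + \<theta>2)"
      by (simp add: powr_add mult_ac)
    finally show ?thesis .
  qed
  then show ?thesis using that unfolding \<theta>1_def \<theta>2_def \<theta>_def by blast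
qed

lemma conv_incl_exponents_le:
  fixes p1 p2 q :: ennreal
  assumes "1 \<le> p1" "p1 \<noteq> top" "1 \<le> p2" "p2 \<noteq> top" "1 \<le> q"
    and "conv_incl TYPE('a::euclidean_space) p1 s1 p2 s2 q s"
  shows "enn2real (1 / p1) + enn2real (1 / p2) \<le> 1 + enn2real (1 / q)"
proof -
  define \<alpha> where "\<alpha> = enn2real (1 / p1) + enn2real (1 / p2)"
  define \<beta> where "\<beta> = 1 + enn2real (1 / q)"
  obtain K where K: "\<And>r. 0 < r \<Longrightarrow> r \<le> 1/2 \<Longrightarrow>
      2 powr (-\<bar>s\<bar>) * measure lebesgue (ball (0::'a) r) powr \<beta>
      \<le> K * measure lebesgue (ball (0::'a) (2 * r)) powr \<alpha>"
    using conv_incl_indicator_ball_bound[OF assms] unfolding \<alpha>_def \<beta>_def by blast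
  define N where "N = real DIM('a)"
  define \<omega> where "\<omega> = unit_ball_vol DIM('a)"
  have "0 < \<omega>" unfolding \<omega>_def by simp
  then have pos: "0 < 2 powr (-\<bar>s\<bar>) * \<omega> powr \<beta>" by (intro mult_pos_pos) auto
  have bound: "2 powr (-\<bar>s\<bar>) * \<omega> powr \<beta> * r powr (N * \<beta>)
      \<le> K * (\<omega> * 2 powr N) powr \<alpha> * r powr (N * \<alpha>)" if "0 < r" "r \<le> 1/2" for r
    using K[OF that] that measure_ball_powr[of r \<beta>, where 'a='a] measure_ball_powr[of "2 * r" \<alpha>, where 'a='a]
    unfolding N_def \<omega>_def by (simp add: powr_mult powr_powr mult_ac)
  have "N * \<alpha> \<le> N * \<beta>"
    by (rule powr_exponent_le_of_bound_at_0[OF pos _ bound, where \<delta> = "1/2"]) simp_all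
  then show ?thesis unfolding \<alpha>_def \<beta>_def N_def by simp
qed

theorem proposition4p2:
  fixes q q1 q2 :: ennreal and s s1 s2 :: real
  assumes "1 \<le> q" "1 \<le> q1" "1 \<le> q2"
    and "conv_incl TYPE('a::euclidean_space) q1 s1 q2 s2 q s"
  shows "1 / q1 + 1 / q2 \<le> 1 + 1 / q"
proof (cases "q1 = top \<or> q2 = top")
  case True
  then have "1 / q1 + 1 / q2 \<le> 1"
    using ennreal_inverse_le_1 assms(2,3) by auto
  also have "1 \<le> 1 + 1 / q" by simp
  finally show ?thesis .
next
  case False
  have "1 / q1 + 1 / q2 = ennreal (enn2real (1 / q1) + enn2real (1 / q2))"
    using assms(2,3) by (simp add: ennreal_enn2real_inverse)
  also have "\<dots> \<le> ennreal (1 + enn2real (1 / q))"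
    using False assms by (intro ennreal_leI conv_incl_exponents_le) auto
  also have "\<dots> = 1 + 1 / q"
    using assms(1) by (simp add: ennreal_enn2real_inverse)
  finally show ?thesis .
qed
end
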